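(* Let $n=5$, let $x_1<x_2<\cdots<x_5$ be fixed real numbers and $Y_i=\beta_0+\beta_1x_i+\varepsilon_i$ ($i=1,\dots,5$) with unknown $\beta_0,\beta_1\in\mathbb{R}$ and $\varepsilon_1,\dots,\varepsilon_5$ i.i.d. with a continuous distribution. Let $s_1<s_2<\cdots<s_{10}$ be the ten slopes $S_{ij}=(Y_i-Y_j)/(x_i-x_j)$, $i<j$, sorted increasingly, and let $w_1<w_2<\cdots<w_{55}$ be the $55$ Walsh averages $(s_i+s_j)/2$, $1\le i\le j\le 10$, sorted increasingly. Define $p_1=P(\beta_1\in(s_2,s_9)\wedge 2s_2\le s_1+s_9\wedge s_2+s_{10}\le 2s_9)$, $p_2=P(\beta_1\in(s_2,s_{10})\wedge 2s_2\le s_1+s_9\wedge 2s_9<s_2+s_{10})$, $p_3=P(\beta_1\in(s_1,s_9)\wedge s_1+s_9<2s_2\wedge s_2+s_{10}\le 2s_9)$, $p_4=P(\beta_1\in(s_1,s_{10})\wedge s_1+s_9<2s_2\wedge 2s_9<s_2+s_{10})$. Then $P(\beta_1\in(w_9,w_{47}))\le p_1+p_2+p_3+p_4$.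
   Context: Ties among the slopes and among the Walsh averages occur with probability zero and are ignored. *)

theory Defs
  imports "HOL-Probability.Probability"
begin

definition sorted_slopes :: "(nat \<Rightarrow> real) \<Rightarrow> (nat \<Rightarrow> real) \<Rightarrow> real list" where
  "sorted_slopes x Y = sort [(Y i - Y j) / (x i - x j). i \<leftarrow> [1..<6], j \<leftarrow> [1..<6], i < j]"

definition ord_slope :: "(nat \<Rightarrow> real) \<Rightarrow> (nat \<Rightarrow> real) \<Rightarrow> nat \<Rightarrow> real" where
  "ord_slope x Y k = sorted_slopes x Y ! (k - 1)"

definition sorted_walsh :: "(nat \<Rightarrow> real) \<Rightarrow> (nat \<Rightarrow> real) \<Rightarrow> real list" where
  "sorted_walsh x Y = sort [(ord_slope x Y i + ord_slope x Y j) / 2.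
                             i \<leftarrow> [1..<11], j \<leftarrow> [1..<11], i \<le> j]"

definition ord_walsh :: "(nat \<Rightarrow> real) \<Rightarrow> (nat \<Rightarrow> real) \<Rightarrow> nat \<Rightarrow> real" where
  "ord_walsh x Y k = sorted_walsh x Y ! (k - 1)"

end

theory Submission
  imports Defs
begin

text \<open>The inequality holds event by event. Every Walsh average below m = min(s_2, (s_1+s_9)/2) has the form
  (s_1+s_j)/2 with j \<le> 8, so at most eight of them lie below m and w_9 \<ge> m. Dually, every
  Walsh average except the eight (s_i+s_10)/2 with 3 \<le> i \<le> 10 is at most
  M = max(s_9, (s_2+s_10)/2), so w_47 \<le> M. Hence {w_9 < \<beta>_1 < w_47} \<subseteq> {m < \<beta>_1 < M},
  which splits into the four events according to which terms attain the min and the max.\<close>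

lemma length_filter_mono_pred:
  assumes "\<And>x. x \<in> set xs \<Longrightarrow> P x \<Longrightarrow> Q x"
  shows "length (filter P xs) \<le> length (filter Q xs)"
  using assms by (induction xs) auto

lemma sorted_nth_down_closed_iff:
  fixes ys :: "'a::linorder list"
  assumes "sorted ys" "k < length ys" and down_closed: "\<And>y z. P y \<Longrightarrow> z \<le> y \<Longrightarrow> P z"
  shows "P (ys ! k) \<longleftrightarrow> k < length (filter P ys)"
proof -
  let ?I = "{i. i < length ys \<and> P (ys ! i)}"
  have count: "length (filter P ys) = card ?I"
    by (simp add: length_filter_conv_card)
  show ?thesis
  proof
    assume "P (ys ! k)"
    then have "{..k} \<subseteq> ?I"
      using assms by (auto simp: sorted_iff_nth_mono)
    then have "card {..k} \<le> card ?I"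
      by (intro card_mono) auto
    then show "k < length (filter P ys)"
      by (simp add: count)
  next
    assume k_less: "k < length (filter P ys)"
    show "P (ys ! k)"
    proof (rule ccontr)
      assume "\<not> P (ys ! k)"
      then have "?I \<subseteq> {..<k}"
        using assms by (auto simp: sorted_iff_nth_mono) (metis linorder_not_le)
      then have "card ?I \<le> k"
        by (metis card_lessThan card_mono finite_lessThan)
      with k_less show False
        by (simp add: count)
    qed
  qed
qed

lemma sort_nth_down_closed_iff:
  fixes xs :: "'a::linorder list"
  assumes "k < length xs" and "\<And>y z. P y \<Longrightarrow> z \<le> y \<Longrightarrow> P z"
  shows "P (sort xs ! k) \<longleftrightarrow> k < length (filter P xs)"
  using sorted_nth_down_closed_iff[of "sort xs" k P] assms by (simp add: filter_sort)

lemma borel_measurable_sort_nth: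
  fixes f :: "'b \<Rightarrow> 'a \<Rightarrow> real"
  assumes "\<And>p. p \<in> set ps \<Longrightarrow> f p \<in> borel_measurable M" and "k < length ps"
  shows "(\<lambda>\<omega>. sort (map (\<lambda>p. f p \<omega>) ps) ! k) \<in> borel_measurable M"
  unfolding borel_measurable_iff_le
proof
  fix t
  let ?count = "\<lambda>\<omega>. \<Sum>i<length ps. if f (ps ! i) \<omega> \<le> t then 1 else 0 :: real"
  have "sort (map (\<lambda>p. f p \<omega>) ps) ! k \<le> t \<longleftrightarrow> real k < ?count \<omega>" for \<omega>
  proof -
    have "length (filter (\<lambda>y. y \<le> t) (map (\<lambda>p. f p \<omega>) ps))
        = card {i. i < length ps \<and> f (ps ! i) \<omega> \<le> t}"
      by (simp add: length_filter_conv_card cong: conj_cong)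
    also have "real \<dots> = ?count \<omega>"
      by (simp add: sum.If_cases Collect_conj_eq lessThan_def Int_commute)
    finally show ?thesis
      using sort_nth_down_closed_iff[of k "map (\<lambda>p. f p \<omega>) ps" "\<lambda>y. y \<le> t"] assms(2)
      by (metis (no_types, lifting) dual_order.trans length_map of_nat_less_iff)
  qed
  then have "{\<omega> \<in> space M. sort (map (\<lambda>p. f p \<omega>) ps) ! k \<le> t}
      = {\<omega> \<in> space M. real k < ?count \<omega>}"
    by blast
  moreover have "?count \<in> borel_measurable M"
    using assms(1) by (intro borel_measurable_sum) (auto intro!: measurable_If)
  ultimately show "{\<omega> \<in> space M. sort (map (\<lambda>p. f p \<omega>) ps) ! k \<le> t} \<in> sets M"
    by simp
qed

definition slope_pairs :: "(nat \<times> nat) list" where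
  "slope_pairs = [(i, j). i \<leftarrow> [1..<6], j \<leftarrow> [1..<6], i < j]"

definition walsh_pairs :: "(nat \<times> nat) list" where
  "walsh_pairs = [(i, j). i \<leftarrow> [1..<11], j \<leftarrow> [1..<11], i \<le> j]"

lemma length_walsh_pairs: "length walsh_pairs = 55"
  by (simp add: walsh_pairs_def upt_rec)

lemma walsh_pairs_bounds: "(i, j) \<in> set walsh_pairs \<Longrightarrow> 1 \<le> i \<and> i \<le> j \<and> j \<le> 10"
  by (auto simp: walsh_pairs_def)

lemma sorted_slopes_eq:
  "sorted_slopes x Y = sort (map (\<lambda>(i, j). (Y i - Y j) / (x i - x j)) slope_pairs)"
  by (simp add: sorted_slopes_def slope_pairs_def map_concat comp_def if_distrib cong: if_cong)

lemma length_sorted_slopes: "length (sorted_slopes x Y) = 10"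
  by (simp add: sorted_slopes_eq slope_pairs_def upt_rec)

lemma ord_slope_mono_on: "mono_on {1..10} (ord_slope x Y)"
proof -
  have "sorted (sorted_slopes x Y)"
    by (simp add: sorted_slopes_def)
  then show ?thesis
    by (intro mono_onI) (auto simp: ord_slope_def length_sorted_slopes sorted_iff_nth_mono)
qed

lemma ord_walsh_eq:
  "ord_walsh x Y k
     = sort (map (\<lambda>(i, j). (ord_slope x Y i + ord_slope x Y j) / 2) walsh_pairs) ! (k - 1)"
  by (simp add: ord_walsh_def sorted_walsh_def walsh_pairs_def map_concat comp_def if_distrib
      cong: if_cong)

lemma walsh_average_9_lower:
  fixes s :: "nat \<Rightarrow> real"
  assumes mono: "mono_on {1..10} s"
  defines "avg \<equiv> \<lambda>(i, j). (s i + s j) / 2"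
  shows "min (s 2) ((s 1 + s 9) / 2) \<le> sort (map avg walsh_pairs) ! 8"
proof -
  define m where "m = min (s 2) ((s 1 + s 9) / 2)"
  have below: "fst p = 1 \<and> snd p \<le> 8" if "p \<in> set walsh_pairs" "avg p < m" for p
  proof (rule ccontr)
    obtain i j where p: "p = (i, j)" by fastforce
    with walsh_pairs_bounds that(1) have ij: "1 \<le> i" "i \<le> j" "j \<le> 10" by auto
    assume "\<not> (fst p = 1 \<and> snd p \<le> 8)"
    with p ij have "2 \<le> i \<or> 9 \<le> j" by auto
    then have "s 2 \<le> s i \<and> s 2 \<le> s j \<or> s 1 \<le> s i \<and> s 9 \<le> s j"
      using ij by (auto intro!: mono_onD[OF mono])
    moreover have "m \<le> s 2" "m \<le> (s 1 + s 9) / 2"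
      unfolding m_def by (rule min.cobounded1, rule min.cobounded2)
    ultimately show False
      using that(2) by (auto simp: avg_def p)
  qed
  have "length (filter (\<lambda>p. avg p < m) walsh_pairs)
      \<le> length (filter (\<lambda>p. fst p = 1 \<and> snd p \<le> 8) walsh_pairs)"
    using below by (intro length_filter_mono_pred)
  also have "\<dots> = 8"
    by (simp add: walsh_pairs_def upt_rec)
  finally have "\<not> sort (map avg walsh_pairs) ! 8 < m"
    using sort_nth_down_closed_iff[of 8 "map avg walsh_pairs" "\<lambda>y. y < m"]
    by (simp add: length_walsh_pairs filter_map comp_def)
  then show ?thesis
    unfolding m_def by (rule leI)
qed

lemma walsh_average_47_upper:
  fixes s :: "nat \<Rightarrow> real"
  assumes mono: "mono_on {1..10} s"
  defines "avg \<equiv> \<lambda>(i, j). (s i + s j) / 2"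
  shows "sort (map avg walsh_pairs) ! 46 \<le> max (s 9) ((s 2 + s 10) / 2)"
proof -
  define M where "M = max (s 9) ((s 2 + s 10) / 2)"
  have above: "avg p \<le> M" if "p \<in> set walsh_pairs" "\<not> (snd p = 10 \<and> 3 \<le> fst p)" for p
  proof -
    obtain i j where p: "p = (i, j)" by fastforce
    with walsh_pairs_bounds that(1) have ij: "1 \<le> i" "i \<le> j" "j \<le> 10" by auto
    with that(2) p have "j \<le> 9 \<or> j = 10 \<and> i \<le> 2" by auto
    then have "s i \<le> s 9 \<and> s j \<le> s 9 \<or> s i \<le> s 2 \<and> j = 10"
      using ij by (auto intro!: mono_onD[OF mono])
    moreover have "s 9 \<le> M" "(s 2 + s 10) / 2 \<le> M"
      unfolding M_def by (rule max.cobounded1, rule max.cobounded2)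
    ultimately show ?thesis
      by (auto simp: avg_def p)
  qed
  have "47 = length (filter (\<lambda>p. \<not> (snd p = 10 \<and> 3 \<le> fst p)) walsh_pairs)"
    by (simp add: walsh_pairs_def upt_rec)
  also have "\<dots> \<le> length (filter (\<lambda>p. avg p \<le> M) walsh_pairs)"
    using above by (intro length_filter_mono_pred)
  finally have "sort (map avg walsh_pairs) ! 46 \<le> M"
    using sort_nth_down_closed_iff[of 46 "map avg walsh_pairs" "\<lambda>y. y \<le> M"]
    by (simp add: length_walsh_pairs filter_map comp_def)
  then show ?thesis
    unfolding M_def .
qed

lemma borel_measurable_ord_slope:
  assumes "\<And>i. i \<in> {1..5} \<Longrightarrow> (\<lambda>\<omega>. Y \<omega> i) \<in> borel_measurable M" and "k \<in> {1..10}"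
  shows "(\<lambda>\<omega>. ord_slope x (Y \<omega>) k) \<in> borel_measurable M"
proof -
  have "(\<lambda>\<omega>. sort (map (\<lambda>p. (Y \<omega> (fst p) - Y \<omega> (snd p)) / (x (fst p) - x (snd p))) slope_pairs)
      ! (k - 1)) \<in> borel_measurable M"
    using assms by (intro borel_measurable_sort_nth) (auto simp: slope_pairs_def upt_rec)
  then show ?thesis
    by (simp add: ord_slope_def sorted_slopes_eq case_prod_unfold)
qed

lemma between_min_max_cases:
  fixes s :: "nat \<Rightarrow> real"
  assumes "mono_on {1..10} s"
    and "min (s 2) ((s 1 + s 9) / 2) < b" "b < max (s 9) ((s 2 + s 10) / 2)"
  shows "s 2 < b \<and> b < s 9 \<and> 2 * s 2 \<le> s 1 + s 9 \<and> s 2 + s 10 \<le> 2 * s 9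
    \<or> s 2 < b \<and> b < s 10 \<and> 2 * s 2 \<le> s 1 + s 9 \<and> 2 * s 9 < s 2 + s 10
    \<or> s 1 < b \<and> b < s 9 \<and> s 1 + s 9 < 2 * s 2 \<and> s 2 + s 10 \<le> 2 * s 9
    \<or> s 1 < b \<and> b < s 10 \<and> s 1 + s 9 < 2 * s 2 \<and> 2 * s 9 < s 2 + s 10"
proof -
  have "s 1 \<le> s 9" "s 2 \<le> s 10"
    by (auto intro!: mono_onD[OF assms(1)])
  with assms(2,3) show ?thesis
    by (auto simp: min_def max_def split: if_splits)
qed

lemma (in finite_measure) measure_le_sum4_of_cover:
  assumes "\<And>\<omega>. \<omega> \<in> space M \<Longrightarrow> P \<omega> \<Longrightarrow> Q1 \<omega> \<or> Q2 \<omega> \<or> Q3 \<omega> \<or> Q4 \<omega>"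
    and "{\<omega> \<in> space M. Q1 \<omega>} \<in> sets M" "{\<omega> \<in> space M. Q2 \<omega>} \<in> sets M"
    and "{\<omega> \<in> space M. Q3 \<omega>} \<in> sets M" "{\<omega> \<in> space M. Q4 \<omega>} \<in> sets M"
  shows "measure M {\<omega> \<in> space M. P \<omega>} \<le> measure M {\<omega> \<in> space M. Q1 \<omega>}
    + measure M {\<omega> \<in> space M. Q2 \<omega>} + measure M {\<omega> \<in> space M. Q3 \<omega>}
    + measure M {\<omega> \<in> space M. Q4 \<omega>}"
proof -
  let ?A = "\<lambda>Q. {\<omega> \<in> space M. Q \<omega>}"
  have "measure M (?A P) \<le> measure M (?A Q1 \<union> ?A Q2 \<union> ?A Q3 \<union> ?A Q4)"
    using assms by (intro finite_measure_mono) auto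
  also have "\<dots> \<le> measure M (?A Q1 \<union> ?A Q2 \<union> ?A Q3) + measure M (?A Q4)"
    using assms(2-5) by (intro measure_Un_le) auto
  also have "measure M (?A Q1 \<union> ?A Q2 \<union> ?A Q3) \<le> measure M (?A Q1 \<union> ?A Q2) + measure M (?A Q3)"
    using assms(2-5) by (intro measure_Un_le) auto
  also have "measure M (?A Q1 \<union> ?A Q2) \<le> measure M (?A Q1) + measure M (?A Q2)"
    using assms(2-5) by (intro measure_Un_le) auto
  finally show ?thesis
    by simp
qed

theorem theorem4:
  fixes M :: "'a measure" and x :: "nat \<Rightarrow> real" and \<epsilon> :: "nat \<Rightarrow> 'a \<Rightarrow> real"
    and \<beta>0 \<beta>1 :: real
  assumes "prob_space M"
    and x_incr: "\<And>i j. 1 \<le> i \<Longrightarrow> i < j \<Longrightarrow> j \<le> 5 \<Longrightarrow> x i < x j"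
    and rv: "\<And>i. i \<in> {1..5} \<Longrightarrow> \<epsilon> i \<in> borel_measurable M"
    and indep: "prob_space.indep_vars M (\<lambda>_. borel) \<epsilon> {1..5}"
    and ident: "\<And>i. i \<in> {1..5} \<Longrightarrow> distr M borel (\<epsilon> i) = distr M borel (\<epsilon> 1)"
    and cont: "\<And>i c. i \<in> {1..5} \<Longrightarrow> measure M {\<omega> \<in> space M. \<epsilon> i \<omega> = c} = 0"
  defines "Y \<equiv> \<lambda>\<omega> i. \<beta>0 + \<beta>1 * x i + \<epsilon> i \<omega>"
  defines "s \<equiv> \<lambda>\<omega> k. ord_slope x (Y \<omega>) k"
  defines "w \<equiv> \<lambda>\<omega> k. ord_walsh x (Y \<omega>) k"
  shows "measure M {\<omega> \<in> space M. w \<omega> 9 < \<beta>1 \<and> \<beta>1 < w \<omega> 47} \<le>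
      measure M {\<omega> \<in> space M. s \<omega> 2 < \<beta>1 \<and> \<beta>1 < s \<omega> 9
          \<and> 2 * s \<omega> 2 \<le> s \<omega> 1 + s \<omega> 9 \<and> s \<omega> 2 + s \<omega> 10 \<le> 2 * s \<omega> 9}
    + measure M {\<omega> \<in> space M. s \<omega> 2 < \<beta>1 \<and> \<beta>1 < s \<omega> 10
          \<and> 2 * s \<omega> 2 \<le> s \<omega> 1 + s \<omega> 9 \<and> 2 * s \<omega> 9 < s \<omega> 2 + s \<omega> 10}
    + measure M {\<omega> \<in> space M. s \<omega> 1 < \<beta>1 \<and> \<beta>1 < s \<omega> 9
          \<and> s \<omega> 1 + s \<omega> 9 < 2 * s \<omega> 2 \<and> s \<omega> 2 + s \<omega> 10 \<le> 2 * s \<omega> 9}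
    + measure M {\<omega> \<in> space M. s \<omega> 1 < \<beta>1 \<and> \<beta>1 < s \<omega> 10
          \<and> s \<omega> 1 + s \<omega> 9 < 2 * s \<omega> 2 \<and> 2 * s \<omega> 9 < s \<omega> 2 + s \<omega> 10}"
proof -
  interpret prob_space M by fact
  have mono: "mono_on {1..10} (s \<omega>)" for \<omega>
    unfolding s_def by (rule ord_slope_mono_on)
  have w_bounds: "min (s \<omega> 2) ((s \<omega> 1 + s \<omega> 9) / 2) \<le> w \<omega> 9"
      "w \<omega> 47 \<le> max (s \<omega> 9) ((s \<omega> 2 + s \<omega> 10) / 2)" for \<omega>
    using walsh_average_9_lower[OF mono] walsh_average_47_upper[OF mono]
    by (simp_all add: w_def s_def ord_walsh_eq)
  have "(\<lambda>\<omega>. Y \<omega> i) \<in> borel_measurable M" if "i \<in> {1..5}" for i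
    unfolding Y_def using rv[OF that] by measurable
  then have s_measurable: "(\<lambda>\<omega>. s \<omega> k) \<in> borel_measurable M" if "k \<in> {1..10}" for k
    unfolding s_def using that by (rule borel_measurable_ord_slope)
  show ?thesis
  proof (rule measure_le_sum4_of_cover, goal_cases)
    case (1 \<omega>)
    with w_bounds[of \<omega>] show ?case
      by (intro between_min_max_cases[OF mono]) linarith+
  qed (auto intro!: sets.sets_Collect_conj borel_measurable_less borel_measurable_le
      borel_measurable_add borel_measurable_times s_measurable)
qed

end
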